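(* For every $t\ge 0$, every $k\ge1$ and every collection $\Omega$ of functions, $$\rho_0\bigl(\mathsf{TL}_{k+1}^{(t+k)}(\Omega)\bigr)\subseteq\rho_0\bigl(\mathsf{gwl}_k^{(t)}\bigr)\subseteq\rho_0\bigl(\mathsf{TL}_{k+1}^{(t+1)}(\Omega)\bigr).$$
   Context: Fix integers $n\ge 1$ and $\ell\ge 1$. A graph is a triple $G=(V_G,E_G,\mathrm{col}_G)$ with $V_G=[n]=\{1,\dots,n\}$, $E_G$ a set of unordered pairs of distinct vertices (undirected, no loops), and a vertex labelling $\mathrm{col}_G:V_G\to\mathbb R^\ell$. Let $\mathcal G$ be the set of all such graphs. Tensor language $\mathsf{TL}(\Omega)$: let $\Omega$ be a collection of functions, each of the form $f:\mathbb R^p\to\mathbb R$ for some $p\ge1$ depending on $f$. Expressions are generated by $\varphi::=\mathbf 1_{x=y}\mid \mathbf 1_{x\neq y}\mid E(x,y)\mid P_s(x)\mid \varphi\cdot\varphi\mid \varphi+\varphi\mid a\cdot\varphi\mid f(\varphi_1,\dots,\varphi_p)\mid \sum_x\varphi$, with $x,y$ index variables, $s\in[\ell]$, $a\in\mathbb R$, $f\in\Omega$ of arity $p$. Free variables: $\mathrm{free}(\mathbf 1_{x\,\mathrm{op}\,y})=\mathrm{free}(E(x,y))=\{x,y\}$, $\mathrm{free}(P_s(x))=\{x\}$; union of the components' free variables for $\cdot$, $+$, $f(\dots)$; $\mathrm{free}(a\cdot\varphi)=\mathrm{free}(\varphi)$; $\mathrm{free}(\sum_x\varphi)=\mathrm{free}(\varphi)\setminus\{x\}$.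 Semantics: for a graph $G$ and a valuation $\nu$ mapping variables to $V_G$: $[\![E(x,y)]\!]^\nu_G=1$ if $\nu(x)\nu(y)\in E_G$ and $0$ otherwise; $[\![P_s(x)]\!]^\nu_G=\mathrm{col}_G(\nu(x))_s$; $[\![\mathbf 1_{x\,\mathrm{op}\,y}]\!]^\nu_G=1$ if $\nu(x)\,\mathrm{op}\,\nu(y)$ and $0$ otherwise; $\cdot$, $+$, scalar multiplication and $f$ act on values; $[\![\sum_x\varphi]\!]^\nu_G=\sum_{v\in V_G}[\![\varphi]\!]^{\nu[x\mapsto v]}_G$. Summation depth $\mathrm{sd}$: $0$ for atoms, maximum over the components for $\cdot$, $+$, $f(\dots)$, $\mathrm{sd}(a\cdot\varphi)=\mathrm{sd}(\varphi)$, $\mathrm{sd}(\sum_x\varphi)=\mathrm{sd}(\varphi)+1$. $\mathsf{TL}_k(\Omega)$ is the set of expressions in which only variables from $\{x_1,\dots,x_k\}$ occur (free or bound; variables may be re-bound), and $\mathsf{TL}_k^{(t)}(\Omega)$ its subset of summation depth at most $t$. For a set $\mathcal L$ of expressions, $\rho_0(\mathcal L)$ is the set of pairs of graphs $(G,H)$ with $[\![\varphi]\!]_G=[\![\varphi]\!]_H$ for all closed (no free variables) $\varphi\in\mathcal L$. $k$-dimensional Weisfeiler–Leman ($k\ge1$): for $\mathbf v\in V_G^k$, $\mathsf{atp}_k(G,\mathbf v)$ records, for all $1\le i<j\le k$, whether $v_i=v_j$ and whether $v_iv_j\in E_G$, together with $\mathrm{col}_G(v_i)$ for all $i$. $\mathsf{wl}_k^{(0)}(G,\mathbf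 v)=\mathsf{atp}_k(G,\mathbf v)$, $\mathsf{wl}_k^{(t+1)}(G,\mathbf v)=\bigl(\mathsf{wl}_k^{(t)}(G,\mathbf v),\{\!\{(\mathsf{atp}_{k+1}(G,(v_1,\dots,v_k,u)),\mathsf{wl}_k^{(t)}(G,\mathbf v[u/1]),\dots,\mathsf{wl}_k^{(t)}(G,\mathbf v[u/k])):u\in V_G\}\!\}\bigr)$, where $\mathbf v[u/i]$ replaces the $i$-th entry by $u$ and $\{\!\{\cdot\}\!\}$ denotes a multiset; labels are compared as formal objects across graphs. $\mathsf{gwl}_k^{(t)}(G)=\{\!\{\mathsf{wl}_k^{(t)}(G,\mathbf v):\mathbf v\in V_G^k\}\!\}$ and $\rho_0(\mathsf{gwl}_k^{(t)})=\{(G,H):\mathsf{gwl}_k^{(t)}(G)=\mathsf{gwl}_k^{(t)}(H)\}$. *)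

theory Defs
  imports Complex_Main "HOL-Library.Multiset"
begin

record graph =
  edge :: "nat \<Rightarrow> nat \<Rightarrow> bool"
  col  :: "nat \<Rightarrow> nat \<Rightarrow> real"     \<comment> \<open>col G v s = s-th coordinate of col_G(v)\<close>

text \<open>The set of all graphs with V_G = {1..n}, undirected loopless edges, labels in R^l
  (coordinates 1..l; the representation is made canonical by requiring everything
  outside [n] resp. [l] to be trivial).\<close>
definition graphs :: "nat \<Rightarrow> nat \<Rightarrow> graph set" where
  "graphs n l = {G. (\<forall>u v. edge G u v \<longrightarrow> u \<in> {1..n} \<and> v \<in> {1..n} \<and> u \<noteq> v)
                  \<and> (\<forall>u v. edge G u v \<longrightarrow> edge G v u)
                  \<and> (\<forall>v s. col G v s \<noteq> 0 \<longrightarrow> v \<in> {1..n} \<and> s \<in> {1..l})}"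

text \<open>Index variables are x_i, represented by the natural number i.
  A function symbol is a HOL function on real lists; Omega is a set of pairs (p, f)
  meaning f : R^p \<rightarrow> R.\<close>
datatype tlexpr =
    EqInd nat nat
  | NeqInd nat nat
  | EdgeAt nat nat
  | Lab nat nat
  | Mul tlexpr tlexpr
  | Plus tlexpr tlexpr
  | Scal real tlexpr
  | App "real list \<Rightarrow> real" "tlexpr list"
  | Sum nat tlexpr

fun free_vars :: "tlexpr \<Rightarrow> nat set" where
  "free_vars (EqInd x y) = {x, y}"
| "free_vars (NeqInd x y) = {x, y}"
| "free_vars (EdgeAt x y) = {x, y}"
| "free_vars (Lab s x) = {x}"
| "free_vars (Mul a b) = free_vars a \<union> free_vars b"
| "free_vars (Plus a b) = free_vars a \<union> free_vars b"
| "free_vars (Scal c a) = free_vars a"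
| "free_vars (App f as) = (\<Union>a\<in>set as. free_vars a)"
| "free_vars (Sum x a) = free_vars a - {x}"

fun all_vars :: "tlexpr \<Rightarrow> nat set" where
  "all_vars (EqInd x y) = {x, y}"
| "all_vars (NeqInd x y) = {x, y}"
| "all_vars (EdgeAt x y) = {x, y}"
| "all_vars (Lab s x) = {x}"
| "all_vars (Mul a b) = all_vars a \<union> all_vars b"
| "all_vars (Plus a b) = all_vars a \<union> all_vars b"
| "all_vars (Scal c a) = all_vars a"
| "all_vars (App f as) = (\<Union>a\<in>set as. all_vars a)"
| "all_vars (Sum x a) = insert x (all_vars a)"

fun sd :: "tlexpr \<Rightarrow> nat" where
  "sd (EqInd x y) = 0"
| "sd (NeqInd x y) = 0"
| "sd (EdgeAt x y) = 0"
| "sd (Lab s x) = 0"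
| "sd (Mul a b) = max (sd a) (sd b)"
| "sd (Plus a b) = max (sd a) (sd b)"
| "sd (Scal c a) = sd a"
| "sd (App f as) = fold max (map sd as) 0"
| "sd (Sum x a) = Suc (sd a)"

fun wf_tl :: "nat \<Rightarrow> (nat \<times> (real list \<Rightarrow> real)) set \<Rightarrow> tlexpr \<Rightarrow> bool" where
  "wf_tl l \<Omega> (EqInd x y) = True"
| "wf_tl l \<Omega> (NeqInd x y) = True"
| "wf_tl l \<Omega> (EdgeAt x y) = True"
| "wf_tl l \<Omega> (Lab s x) = (s \<in> {1..l})"
| "wf_tl l \<Omega> (Mul a b) = (wf_tl l \<Omega> a \<and> wf_tl l \<Omega> b)"
| "wf_tl l \<Omega> (Plus a b) = (wf_tl l \<Omega> a \<and> wf_tl l \<Omega> b)"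
| "wf_tl l \<Omega> (Scal c a) = wf_tl l \<Omega> a"
| "wf_tl l \<Omega> (App f as) = ((length as, f) \<in> \<Omega> \<and> (\<forall>a\<in>set as. wf_tl l \<Omega> a))"
| "wf_tl l \<Omega> (Sum x a) = wf_tl l \<Omega> a"

text \<open>TL_k^{(t)}(Omega): well-formed expressions using only variables x_1..x_k,
  of summation depth at most t.\<close>
definition TL :: "nat \<Rightarrow> (nat \<times> (real list \<Rightarrow> real)) set \<Rightarrow> nat \<Rightarrow> nat \<Rightarrow> tlexpr set" where
  "TL l \<Omega> k t = {\<phi>. wf_tl l \<Omega> \<phi> \<and> all_vars \<phi> \<subseteq> {1..k} \<and> sd \<phi> \<le> t}"

fun sem :: "nat \<Rightarrow> graph \<Rightarrow> (nat \<Rightarrow> nat) \<Rightarrow> tlexpr \<Rightarrow> real" where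
  "sem n G \<nu> (EqInd x y) = (if \<nu> x = \<nu> y then 1 else 0)"
| "sem n G \<nu> (NeqInd x y) = (if \<nu> x \<noteq> \<nu> y then 1 else 0)"
| "sem n G \<nu> (EdgeAt x y) = (if edge G (\<nu> x) (\<nu> y) then 1 else 0)"
| "sem n G \<nu> (Lab s x) = col G (\<nu> x) s"
| "sem n G \<nu> (Mul a b) = sem n G \<nu> a * sem n G \<nu> b"
| "sem n G \<nu> (Plus a b) = sem n G \<nu> a + sem n G \<nu> b"
| "sem n G \<nu> (Scal c a) = c * sem n G \<nu> a"
| "sem n G \<nu> (App f as) = f (map (sem n G \<nu>) as)"
| "sem n G \<nu> (Sum x a) = (\<Sum>v\<in>{1..n}. sem n G (\<nu>(x := v)) a)"

text \<open>rho_0(L): pairs of graphs agreeing on all closed expressions of L.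
  For closed expressions the valuation is irrelevant; we quantify over all valuations
  into V_G = [n].\<close>
definition rho0_TL :: "nat \<Rightarrow> nat \<Rightarrow> tlexpr set \<Rightarrow> (graph \<times> graph) set" where
  "rho0_TL n l L = {(G, H). G \<in> graphs n l \<and> H \<in> graphs n l \<and>
      (\<forall>\<phi>\<in>L. free_vars \<phi> = {} \<longrightarrow>
         (\<forall>\<nu>. range \<nu> \<subseteq> {1..n} \<longrightarrow> sem n G \<nu> \<phi> = sem n H \<nu> \<phi>))}"

definition atp :: "nat \<Rightarrow> graph \<Rightarrow> nat list \<Rightarrow> (bool \<times> bool) list \<times> real list list" where
  "atp l G v = (concat (map (\<lambda>i. map (\<lambda>j. (v!i = v!j, edge G (v!i) (v!j))) [Suc i..<length v])
                             [0..<length v]),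
                map (\<lambda>x. map (\<lambda>s. col G x s) [1..<Suc l]) v)"

datatype wlcol =
    Base "(bool \<times> bool) list \<times> real list list"
  | Refine wlcol "(((bool \<times> bool) list \<times> real list list) \<times> wlcol list) multiset"

fun wl :: "nat \<Rightarrow> nat \<Rightarrow> graph \<Rightarrow> nat \<Rightarrow> nat list \<Rightarrow> wlcol" where
  "wl n l G 0 v = Base (atp l G v)"
| "wl n l G (Suc t) v = Refine (wl n l G t v)
     (image_mset (\<lambda>u. (atp l G (v @ [u]), map (\<lambda>i. wl n l G t (v[i := u])) [0..<length v]))
        (mset_set {1..n}))"

definition tuples :: "nat \<Rightarrow> nat \<Rightarrow> nat list set" where
  "tuples n k = {v. length v = k \<and> set v \<subseteq> {1..n}}"

definition gwl :: "nat \<Rightarrow> nat \<Rightarrow> nat \<Rightarrow> nat \<Rightarrow> graph \<Rightarrow> wlcol multiset" where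
  "gwl n l k t G = image_mset (wl n l G t) (mset_set (tuples n k))"

definition rho0_gwl :: "nat \<Rightarrow> nat \<Rightarrow> nat \<Rightarrow> nat \<Rightarrow> (graph \<times> graph) set" where
  "rho0_gwl n l k t = {(G, H). G \<in> graphs n l \<and> H \<in> graphs n l \<and> gwl n l k t G = gwl n l k t H}"

end

theory Submission
  imports Defs "HOL-Combinatorics.Transposition"
begin

text \<open>
  Right inclusion: by induction on \<open>t\<close>, two \<open>k\<close>-tuples with the same colour after \<open>t\<close> rounds
  give equal values to every expression with \<open>k + 1\<close> variables and summation depth at most \<open>t\<close>
  whose free variables are read from corresponding entries of the tuples. A summation is handled
  through the refinement multiset of neighbour labels; it has at most \<open>k\<close> free variables, so after
  adding the summed vertex to the tuple one position is free and we are back to \<open>k\<close>-tuples.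
  A closed expression of depth \<open>t + 1\<close> is built from sums over a single vertex, and such a sum is
  \<open>n\<^sup>1\<^sup>-\<^sup>k\<close> times the sum, over all \<open>k\<close>-tuples, of its value at the first entry, which is
  determined by the colour multiset.

  Left inclusion: on finitely many graphs every colour after \<open>t\<close> rounds is detected by an
  expression in the free variables \<open>x\<^sub>1, \<dots>, x\<^sub>k\<close> of depth \<open>t\<close> with \<open>k + 1\<close> variables. Atomic types
  are detected by products of affinely rescaled atoms; a refined colour by testing every count of
  neighbour labels, obtained as a sum over \<open>x\<^sub>k\<^sub>+\<^sub>1\<close>, with a Lagrange polynomial. Summing the
  detector over \<open>x\<^sub>1, \<dots>, x\<^sub>k\<close> counts the tuples of a colour with \<open>k\<close> further summations.
\<close>

lemma fold_max_le_iff: "fold max xs (b::nat) \<le> t \<longleftrightarrow> b \<le> t \<and> (\<forall>x\<in>set xs. x \<le> t)"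
  by (induction xs arbitrary: b) auto

lemma free_vars_subset_all_vars: "free_vars \<phi> \<subseteq> all_vars \<phi>"
  by (induction \<phi>) auto

lemma finite_free_vars: "finite (free_vars \<phi>)"
  by (induction \<phi>) auto

lemma EqInd_in_TL [simp]: "EqInd x y \<in> TL l \<Omega> K t \<longleftrightarrow> x \<in> {1..K} \<and> y \<in> {1..K}"
  and NeqInd_in_TL [simp]: "NeqInd x y \<in> TL l \<Omega> K t \<longleftrightarrow> x \<in> {1..K} \<and> y \<in> {1..K}"
  and EdgeAt_in_TL [simp]: "EdgeAt x y \<in> TL l \<Omega> K t \<longleftrightarrow> x \<in> {1..K} \<and> y \<in> {1..K}"
  and Lab_in_TL [simp]: "Lab s x \<in> TL l \<Omega> K t \<longleftrightarrow> s \<in> {1..l} \<and> x \<in> {1..K}"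
  and Mul_in_TL [simp]: "Mul a b \<in> TL l \<Omega> K t \<longleftrightarrow> a \<in> TL l \<Omega> K t \<and> b \<in> TL l \<Omega> K t"
  and Plus_in_TL [simp]: "Plus a b \<in> TL l \<Omega> K t \<longleftrightarrow> a \<in> TL l \<Omega> K t \<and> b \<in> TL l \<Omega> K t"
  and Scal_in_TL [simp]: "Scal c a \<in> TL l \<Omega> K t \<longleftrightarrow> a \<in> TL l \<Omega> K t"
  and App_in_TL [simp]: "App f as \<in> TL l \<Omega> K t \<longleftrightarrow> (length as, f) \<in> \<Omega> \<and> set as \<subseteq> TL l \<Omega> K t"
  and Sum_in_TL [simp]: "Sum x a \<in> TL l \<Omega> K t \<longleftrightarrow> 0 < t \<and> x \<in> {1..K} \<and> a \<in> TL l \<Omega> K (t - 1)"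
  by (auto simp: TL_def fold_max_le_iff)

lemma TL_mono: "t \<le> t' \<Longrightarrow> TL l \<Omega> K t \<subseteq> TL l \<Omega> K t'"
  by (auto simp: TL_def)

fun rename_vars :: "(nat \<Rightarrow> nat) \<Rightarrow> tlexpr \<Rightarrow> tlexpr" where
  "rename_vars f (EqInd x y) = EqInd (f x) (f y)"
| "rename_vars f (NeqInd x y) = NeqInd (f x) (f y)"
| "rename_vars f (EdgeAt x y) = EdgeAt (f x) (f y)"
| "rename_vars f (Lab s x) = Lab s (f x)"
| "rename_vars f (Mul a b) = Mul (rename_vars f a) (rename_vars f b)"
| "rename_vars f (Plus a b) = Plus (rename_vars f a) (rename_vars f b)"
| "rename_vars f (Scal c a) = Scal c (rename_vars f a)"
| "rename_vars f (App g as) = App g (map (rename_vars f) as)"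
| "rename_vars f (Sum x a) = Sum (f x) (rename_vars f a)"

lemma sem_rename_vars: "inj f \<Longrightarrow> sem n G \<nu> (rename_vars f \<phi>) = sem n G (\<nu> \<circ> f) \<phi>"
proof (induction \<phi> arbitrary: \<nu>)
  case (App g as)
  then show ?case by (simp add: comp_def cong: map_cong)
next
  case (Sum x a)
  have "(\<nu>(f x := v)) \<circ> f = (\<nu> \<circ> f)(x := v)" for v
    using Sum.prems by (auto simp: inj_eq)
  then show ?case by (simp only: sem.simps rename_vars.simps Sum.IH Sum.prems)
qed auto

lemma free_vars_rename_vars: "inj f \<Longrightarrow> free_vars (rename_vars f \<phi>) = f ` free_vars \<phi>"
  by (induction \<phi>) (auto simp: inj_eq image_Un)

lemma rename_vars_in_TL:
  "f ` {1..K} \<subseteq> {1..K} \<Longrightarrow> \<phi> \<in> TL l \<Omega> K t \<Longrightarrow> rename_vars f \<phi> \<in> TL l \<Omega> K t"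
  by (induction \<phi> arbitrary: t) (auto simp del: atLeastAtMost_iff)

text \<open>The language has no constants: \<open>1\<close> is written with the variable \<open>x\<^sub>1\<close>.\<close>
definition One_expr :: tlexpr where
  "One_expr = EqInd 1 1"

definition Zero_expr :: tlexpr where
  "Zero_expr = Scal 0 One_expr"

lemma sem_One_expr [simp]: "sem n G \<nu> One_expr = 1"
  and sem_Zero_expr [simp]: "sem n G \<nu> Zero_expr = 0"
  and free_vars_One_expr [simp]: "free_vars One_expr = {1}"
  and free_vars_Zero_expr [simp]: "free_vars Zero_expr = {1}"
  and One_expr_in_TL [simp]: "One_expr \<in> TL l \<Omega> K t \<longleftrightarrow> 1 \<le> K"
  and Zero_expr_in_TL [simp]: "Zero_expr \<in> TL l \<Omega> K t \<longleftrightarrow> 1 \<le> K"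
  by (auto simp: One_expr_def Zero_expr_def)

fun Prod_list :: "tlexpr list \<Rightarrow> tlexpr" where
  "Prod_list [] = One_expr"
| "Prod_list (\<phi> # \<phi>s) = Mul \<phi> (Prod_list \<phi>s)"

text \<open>Meaningful only for finite sets; the enumeration chosen by \<open>SOME\<close> does not matter.\<close>
definition Prod_over :: "('a \<Rightarrow> tlexpr) \<Rightarrow> 'a set \<Rightarrow> tlexpr" where
  "Prod_over f A = Prod_list (map f (SOME xs. set xs = A \<and> distinct xs))"

lemma Prod_over_list:
  assumes "finite A"
  obtains xs where "set xs = A" "distinct xs" "Prod_over f A = Prod_list (map f xs)"
  using someI_ex[OF finite_distinct_list[OF assms]] unfolding Prod_over_def by blast

lemma sem_Prod_over:
  assumes "finite A"
  shows "sem n G \<nu> (Prod_over f A) = (\<Prod>a\<in>A. sem n G \<nu> (f a))"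
proof -
  obtain xs where xs: "set xs = A" "distinct xs" "Prod_over f A = Prod_list (map f xs)"
    using Prod_over_list[OF assms] .
  have "sem n G \<nu> (Prod_list (map f xs)) = (\<Prod>a\<in>set xs. sem n G \<nu> (f a))"
    using xs(2) by (induction xs) auto
  then show ?thesis using xs by simp
qed

lemma Prod_list_in_TL: "1 \<le> K \<Longrightarrow> set \<phi>s \<subseteq> TL l \<Omega> K t \<Longrightarrow> Prod_list \<phi>s \<in> TL l \<Omega> K t"
  by (induction \<phi>s) auto

lemma Prod_over_in_TL:
  assumes "finite A" "1 \<le> K" "f ` A \<subseteq> TL l \<Omega> K t"
  shows "Prod_over f A \<in> TL l \<Omega> K t"
proof -
  obtain xs where xs: "set xs = A" "Prod_over f A = Prod_list (map f xs)"
    using Prod_over_list[OF assms(1)] by metis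
  then show ?thesis
    using Prod_list_in_TL[OF assms(2), of "map f xs"] assms(3) by simp
qed

lemma free_vars_Prod_over:
  assumes "finite A"
  shows "free_vars (Prod_over f A) = insert 1 (\<Union>a\<in>A. free_vars (f a))"
proof -
  obtain xs where xs: "set xs = A" "Prod_over f A = Prod_list (map f xs)"
    using Prod_over_list[OF assms] by metis
  have "free_vars (Prod_list (map f xs)) = insert 1 (\<Union>a\<in>set xs. free_vars (f a))"
    by (induction xs) auto
  then show ?thesis using xs by simp
qed

section \<open>Atomic types and tuples of vertices\<close>

lemma graph_edge_sym: "X \<in> graphs n l \<Longrightarrow> edge X u v \<longleftrightarrow> edge X v u"
  unfolding graphs_def by blast

lemma graph_no_loop: "X \<in> graphs n l \<Longrightarrow> \<not> edge X u u"
  unfolding graphs_def by blast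

lemma atp_eq_iff_upper:
  assumes "length a = length b"
  shows "atp l X a = atp l Y b \<longleftrightarrow>
    (\<forall>j<length a. \<forall>i<j. (a!i = a!j \<longleftrightarrow> b!i = b!j) \<and> (edge X (a!i) (a!j) \<longleftrightarrow> edge Y (b!i) (b!j)))
    \<and> (\<forall>i<length a. \<forall>s\<in>{1..l}. col X (a!i) s = col Y (b!i) s)"
proof -
  let ?m = "length a"
  define row where "row Z c = (\<lambda>i. map (\<lambda>j. (c!i = c!j, edge Z (c!i) (c!j))) [Suc i..<?m])"
    for Z :: graph and c :: "nat list"
  define colours where "colours Z c = map (\<lambda>x. map (\<lambda>s. col Z x s) [1..<Suc l]) c"
    for Z :: graph and c :: "nat list"
  have "concat (map (row X a) [0..<?m]) = concat (map (row Y b) [0..<?m])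
      \<longleftrightarrow> (\<forall>i<?m. row X a i = row Y b i)"
    by (subst concat_eq_concat_iff) (auto simp: row_def set_zip)
  also have "\<dots> \<longleftrightarrow> (\<forall>j<?m. \<forall>i<j. (a!i = a!j \<longleftrightarrow> b!i = b!j) \<and> (edge X (a!i) (a!j) \<longleftrightarrow> edge Y (b!i) (b!j)))"
    by (auto simp: row_def map_eq_conv)
  finally have rows: "concat (map (row X a) [0..<?m]) = concat (map (row Y b) [0..<?m])
      \<longleftrightarrow> (\<forall>j<?m. \<forall>i<j. (a!i = a!j \<longleftrightarrow> b!i = b!j) \<and> (edge X (a!i) (a!j) \<longleftrightarrow> edge Y (b!i) (b!j)))" .
  have "colours X a = colours Y b \<longleftrightarrow> (\<forall>i<?m. \<forall>s\<in>set [1..<Suc l]. col X (a!i) s = col Y (b!i) s)"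
    using assms unfolding colours_def list_eq_iff_nth_eq[of "map _ a"]
    by (auto simp: map_eq_conv simp del: upt_Suc set_upt)
  also have "set [1..<Suc l] = {1..l}"
    by auto
  finally have "colours X a = colours Y b \<longleftrightarrow> (\<forall>i<?m. \<forall>s\<in>{1..l}. col X (a!i) s = col Y (b!i) s)" .
  moreover have "atp l X a = atp l Y b \<longleftrightarrow>
      concat (map (row X a) [0..<?m]) = concat (map (row Y b) [0..<?m]) \<and> colours X a = colours Y b"
    using assms unfolding atp_def row_def colours_def by simp
  ultimately show ?thesis using rows by simp
qed

lemma atp_eq_iff:
  assumes "X \<in> graphs n l" "Y \<in> graphs n l" "length a = length b"
  shows "atp l X a = atp l Y b \<longleftrightarrow>
    (\<forall>i<length a. \<forall>j<length a. (a!i = a!j \<longleftrightarrow> b!i = b!j) \<and> (edge X (a!i) (a!j) \<longleftrightarrow> edge Y (b!i) (b!j)))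
    \<and> (\<forall>i<length a. \<forall>s\<in>{1..l}. col X (a!i) s = col Y (b!i) s)"
proof -
  have "(\<forall>j<length a. \<forall>i<j. (a!i = a!j \<longleftrightarrow> b!i = b!j) \<and> (edge X (a!i) (a!j) \<longleftrightarrow> edge Y (b!i) (b!j)))
    \<longleftrightarrow> (\<forall>i<length a. \<forall>j<length a. (a!i = a!j \<longleftrightarrow> b!i = b!j) \<and> (edge X (a!i) (a!j) \<longleftrightarrow> edge Y (b!i) (b!j)))"
  proof (intro iffI allI impI)
    fix i j assume upper: "\<forall>j<length a. \<forall>i<j. (a!i = a!j \<longleftrightarrow> b!i = b!j) \<and> (edge X (a!i) (a!j) \<longleftrightarrow> edge Y (b!i) (b!j))"
      and "i < length a" "j < length a"
    then consider "i < j" | "i = j" | "j < i" by linarith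
    then show "(a!i = a!j \<longleftrightarrow> b!i = b!j) \<and> (edge X (a!i) (a!j) \<longleftrightarrow> edge Y (b!i) (b!j))"
    proof cases
      case 3
      then have "(a!j = a!i \<longleftrightarrow> b!j = b!i) \<and> (edge X (a!j) (a!i) \<longleftrightarrow> edge Y (b!j) (b!i))"
        using upper \<open>i < length a\<close> by blast
      then show ?thesis
        by (simp add: eq_commute[of "a!j"] eq_commute[of "b!j"]
            graph_edge_sym[OF assms(1), of "a!j"] graph_edge_sym[OF assms(2), of "b!j"])
    qed (use upper \<open>j < length a\<close> graph_no_loop[OF assms(1)] graph_no_loop[OF assms(2)] in auto)
  qed auto
  then show ?thesis using atp_eq_iff_upper[OF assms(3)] by simp
qed

lemma atp_eqD:
  assumes "X \<in> graphs n l" "Y \<in> graphs n l" "length a = length b" "atp l X a = atp l Y b"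
    and "i < length a" "j < length a"
  shows "a!i = a!j \<longleftrightarrow> b!i = b!j" "edge X (a!i) (a!j) \<longleftrightarrow> edge Y (b!i) (b!j)"
    and "s \<in> {1..l} \<Longrightarrow> col X (a!i) s = col Y (b!i) s"
  using atp_eq_iff[OF assms(1-3)] assms(4-6) by blast+

lemma tuples_Suc: "tuples n (Suc m) = (\<lambda>(u, v). u # v) ` ({1..n} \<times> tuples n m)"
  unfolding tuples_def by (auto simp: length_Suc_conv image_iff)

lemma finite_tuples: "finite (tuples n m)"
  and card_tuples: "card (tuples n m) = n ^ m"
proof -
  have "tuples n m = {xs. set xs \<subseteq> {1..n} \<and> length xs = m}"
    unfolding tuples_def by auto
  then show "finite (tuples n m)" "card (tuples n m) = n ^ m"
    using finite_lists_length_eq[of "{1..n}" m] card_lists_length_eq[of "{1..n}" m] by simp_all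
qed

lemma sum_tuples_Suc:
  "(\<Sum>w\<in>tuples n (Suc m). g w) = (\<Sum>u\<in>{1..n}. \<Sum>v\<in>tuples n m. g (u # v))"
proof -
  have "inj_on (\<lambda>(u, v). u # v) ({1..n} \<times> tuples n m)"
    by (auto simp: inj_on_def)
  then have "(\<Sum>w\<in>tuples n (Suc m). g w) = (\<Sum>(u, v)\<in>{1..n} \<times> tuples n m. g (u # v))"
    unfolding tuples_Suc by (subst sum.reindex) (auto simp: comp_def case_prod_beta)
  then show ?thesis
    by (simp add: sum.cartesian_product)
qed

lemma sum_indicator_eq_count:
  "finite A \<Longrightarrow> (\<Sum>u\<in>A. if h u = e then 1 else 0 :: real) = real (count (image_mset h (mset_set A)) e)"
  by (induction A rule: finite_induct) auto

lemma sum_eq_if_image_mset_eq: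
  fixes FA :: "'a \<Rightarrow> real" and FB :: "'b \<Rightarrow> real"
  assumes "finite A" "finite B"
    and colours: "image_mset hA (mset_set A) = image_mset hB (mset_set B)"
    and determined: "\<And>a b. a \<in> A \<Longrightarrow> b \<in> B \<Longrightarrow> hA a = hB b \<Longrightarrow> FA a = FB b"
  shows "sum FA A = sum FB B"
proof -
  have images: "hA ` A = hB ` B"
    using arg_cong[OF colours, of set_mset] assms(1,2) by simp
  define c where "c z = FB (SOME b. b \<in> B \<and> hB b = z)" for z
  have cB: "c (hB b) = FB b" if "b \<in> B" for b
  proof -
    let ?b' = "SOME b'. b' \<in> B \<and> hB b' = hB b"
    have b': "?b' \<in> B \<and> hB ?b' = hB b"
      by (rule someI_ex) (use that in blast)
    have "hB b \<in> hA ` A"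
      using images that by blast
    then obtain a where a: "hB b = hA a" "a \<in> A"
      by (rule imageE)
    have "FA a = FB ?b'"
      by (rule determined) (use a b' in auto)
    moreover have "FA a = FB b"
      by (rule determined) (use a that in auto)
    ultimately show ?thesis
      unfolding c_def by simp
  qed
  have cA: "c (hA a) = FA a" if "a \<in> A" for a
  proof -
    have "hA a \<in> hB ` B"
      using images that by blast
    then obtain b where "hA a = hB b" "b \<in> B"
      by auto
    then show ?thesis
      using cB[of b] determined[of a b] that by simp
  qed
  have "sum FA A = sum (c \<circ> hA) A"
    using cA by (intro sum.cong) auto
  also have "\<dots> = sum_mset (image_mset c (image_mset hA (mset_set A)))"
    by (simp only: sum_unfold_sum_mset image_mset.compositionality)
  also have "\<dots> = sum_mset (image_mset c (image_mset hB (mset_set B)))"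
    unfolding colours ..
  also have "\<dots> = sum (c \<circ> hB) B"
    by (simp only: sum_unfold_sum_mset image_mset.compositionality)
  also have "\<dots> = sum FB B"
    using cB by (intro sum.cong) auto
  finally show ?thesis .
qed

definition tuple_of :: "nat \<Rightarrow> (nat \<Rightarrow> nat) \<Rightarrow> nat list" where
  "tuple_of m \<nu> = map \<nu> [1..<Suc m]"

lemma length_tuple_of [simp]: "length (tuple_of m \<nu>) = m"
  by (simp add: tuple_of_def)

lemma nth_tuple_of [simp]: "i < m \<Longrightarrow> tuple_of m \<nu> ! i = \<nu> (Suc i)"
  by (simp add: tuple_of_def del: upt_Suc)

lemma tuple_of_in_tuples: "range \<nu> \<subseteq> {1..n} \<Longrightarrow> tuple_of m \<nu> \<in> tuples n m"
  unfolding tuple_of_def tuples_def by auto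

lemma tuple_of_Suc: "tuple_of (Suc m) \<nu> = tuple_of m \<nu> @ [\<nu> (Suc m)]"
  unfolding tuple_of_def by simp

lemma tuple_of_fun_upd_out [simp]: "m < x \<Longrightarrow> tuple_of m (\<nu>(x := u)) = tuple_of m \<nu>"
  unfolding tuple_of_def by (intro map_cong) auto

fun fun_upds :: "(nat \<Rightarrow> nat) \<Rightarrow> nat list \<Rightarrow> nat list \<Rightarrow> nat \<Rightarrow> nat" where
  "fun_upds \<nu> [] w = \<nu>"
| "fun_upds \<nu> (x # xs) w = fun_upds (\<nu>(x := hd w)) xs (tl w)"

lemma fun_upds_notin: "y \<notin> set xs \<Longrightarrow> fun_upds \<nu> xs w y = \<nu> y"
  by (induction xs arbitrary: \<nu> w) auto

lemma map_fun_upds: "distinct xs \<Longrightarrow> length w = length xs \<Longrightarrow> map (fun_upds \<nu> xs w) xs = w"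
  by (induction xs arbitrary: \<nu> w) (auto simp: fun_upds_notin length_Suc_conv)

lemma range_fun_upds:
  "range \<nu> \<subseteq> A \<Longrightarrow> set w \<subseteq> A \<Longrightarrow> length w = length xs \<Longrightarrow> range (fun_upds \<nu> xs w) \<subseteq> A"
proof (induction xs arbitrary: \<nu> w)
  case (Cons x xs)
  then obtain u w' where "w = u # w'"
    by (cases w) auto
  moreover have "range (\<nu>(x := u)) \<subseteq> A"
    using Cons.prems \<open>w = u # w'\<close> by auto
  ultimately show ?case
    using Cons by simp
qed simp

fun Sums :: "nat list \<Rightarrow> tlexpr \<Rightarrow> tlexpr" where
  "Sums [] \<phi> = \<phi>"
| "Sums (x # xs) \<phi> = Sum x (Sums xs \<phi>)"

lemma sem_Sums:
  "sem n G \<nu> (Sums xs \<phi>) = (\<Sum>w\<in>tuples n (length xs). sem n G (fun_upds \<nu> xs w) \<phi>)"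
proof (induction xs arbitrary: \<nu>)
  case Nil
  have "tuples n 0 = {[]}"
    unfolding tuples_def by auto
  then show ?case by simp
next
  case (Cons x xs)
  show ?case
    by (simp only: Sums.simps sem.simps Cons.IH length_Cons sum_tuples_Suc fun_upds.simps list.sel
        atLeastAtMost_iff)
qed

lemma free_vars_Sums: "free_vars (Sums xs \<phi>) = free_vars \<phi> - set xs"
  by (induction xs) auto

lemma Sums_in_TL: "set xs \<subseteq> {1..K} \<Longrightarrow> \<phi> \<in> TL l \<Omega> K t \<Longrightarrow> Sums xs \<phi> \<in> TL l \<Omega> K (t + length xs)"
  by (induction xs) auto

section \<open>Equal colours force equal values\<close>

definition reads_tuples ::
  "(nat \<Rightarrow> nat) \<Rightarrow> nat list \<Rightarrow> nat list \<Rightarrow> (nat \<Rightarrow> nat) \<Rightarrow> (nat \<Rightarrow> nat) \<Rightarrow> tlexpr \<Rightarrow> bool" where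
  "reads_tuples \<pi> a b \<nu>a \<nu>b \<phi> \<longleftrightarrow>
     (\<forall>x\<in>free_vars \<phi>. \<pi> x < length a \<and> \<nu>a x = a ! \<pi> x \<and> \<nu>b x = b ! \<pi> x)"

lemma sem_eq_if_Sum_subterms_eq:
  assumes graphs: "X \<in> graphs n l" "Y \<in> graphs n l"
    and "length a = length b" and "atp l X a = atp l Y b"
    and Sum_eq: "\<And>y \<chi> \<pi> \<nu>X \<nu>Y. Sum y \<chi> \<in> TL l \<Omega> K t \<Longrightarrow> reads_tuples \<pi> a b \<nu>X \<nu>Y (Sum y \<chi>)
      \<Longrightarrow> sem n X \<nu>X (Sum y \<chi>) = sem n Y \<nu>Y (Sum y \<chi>)"
  shows "\<phi> \<in> TL l \<Omega> K t \<Longrightarrow> reads_tuples \<pi> a b \<nu>X \<nu>Y \<phi> \<Longrightarrow> sem n X \<nu>X \<phi> = sem n Y \<nu>Y \<phi>"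
proof (induction \<phi>)
  case (EqInd x y)
  then show ?case
    using atp_eqD(1)[OF graphs assms(3,4), of "\<pi> x" "\<pi> y"] by (auto simp: reads_tuples_def)
next
  case (NeqInd x y)
  then show ?case
    using atp_eqD(1)[OF graphs assms(3,4), of "\<pi> x" "\<pi> y"] by (auto simp: reads_tuples_def)
next
  case (EdgeAt x y)
  then show ?case
    using atp_eqD(2)[OF graphs assms(3,4), of "\<pi> x" "\<pi> y"] by (auto simp: reads_tuples_def)
next
  case (Lab s x)
  then show ?case
    using atp_eqD(3)[OF graphs assms(3,4), of "\<pi> x" "\<pi> x" s] by (auto simp: reads_tuples_def)
next
  case (App f as)
  then have "map (sem n X \<nu>X) as = map (sem n Y \<nu>Y) as"
    by (auto simp: reads_tuples_def)
  then show ?case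
    by (simp only: sem.simps)
next
  case (Sum y \<chi>)
  show ?case
    using Sum.prems by (rule Sum_eq)
qed (auto simp: reads_tuples_def)

lemma atp_eq_if_wl_eq: "wl n l X t a = wl n l Y t b \<Longrightarrow> atp l X a = atp l Y b"
  by (induction t) auto

definition neighbour_label ::
  "nat \<Rightarrow> nat \<Rightarrow> graph \<Rightarrow> nat \<Rightarrow> nat list \<Rightarrow> nat \<Rightarrow> ((bool \<times> bool) list \<times> real list list) \<times> wlcol list" where
  "neighbour_label n l Z t v u = (atp l Z (v @ [u]), map (\<lambda>i. wl n l Z t (v[i := u])) [0..<length v])"

definition neighbours ::
  "nat \<Rightarrow> nat \<Rightarrow> graph \<Rightarrow> nat \<Rightarrow> nat list \<Rightarrow> (((bool \<times> bool) list \<times> real list list) \<times> wlcol list) multiset" where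
  "neighbours n l Z t v = image_mset (neighbour_label n l Z t v) (mset_set {1..n})"

lemma wl_Suc_neighbours: "wl n l Z (Suc t) v = Refine (wl n l Z t v) (neighbours n l Z t v)"
  by (simp add: neighbours_def neighbour_label_def[abs_def])

definition wl_determines_TL ::
  "nat \<Rightarrow> nat \<Rightarrow> (nat \<times> (real list \<Rightarrow> real)) set \<Rightarrow> nat \<Rightarrow> nat \<Rightarrow> graph \<Rightarrow> graph \<Rightarrow> bool" where
  "wl_determines_TL n l \<Omega> k t X Y \<longleftrightarrow> (\<forall>a b \<phi> \<pi> \<nu>X \<nu>Y.
     a \<in> tuples n k \<longrightarrow> b \<in> tuples n k \<longrightarrow> wl n l X t a = wl n l Y t b \<longrightarrow>
     \<phi> \<in> TL l \<Omega> (k + 1) t \<longrightarrow> reads_tuples \<pi> a b \<nu>X \<nu>Y \<phi> \<longrightarrow> sem n X \<nu>X \<phi> = sem n Y \<nu>Y \<phi>)"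

lemma wl_determines_TLD:
  "wl_determines_TL n l \<Omega> k t X Y \<Longrightarrow> a \<in> tuples n k \<Longrightarrow> b \<in> tuples n k \<Longrightarrow>
    wl n l X t a = wl n l Y t b \<Longrightarrow> \<phi> \<in> TL l \<Omega> (k + 1) t \<Longrightarrow> reads_tuples \<pi> a b \<nu>X \<nu>Y \<phi> \<Longrightarrow>
    sem n X \<nu>X \<phi> = sem n Y \<nu>Y \<phi>"
  unfolding wl_determines_TL_def by blast

lemma card_free_vars_Sum_le:
  assumes "all_vars (Sum y \<chi>) \<subseteq> {1..k + 1}"
  shows "card (free_vars (Sum y \<chi>)) \<le> k"
proof -
  have "free_vars (Sum y \<chi>) \<subseteq> {1..k + 1} - {y}"
    using assms free_vars_subset_all_vars[of \<chi>] by auto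
  moreover have "card ({1..k + 1} - {y}) = k"
    using assms by simp
  ultimately show ?thesis
    by (metis card_mono finite_Diff finite_atLeastAtMost)
qed

lemma exists_position_not_in_image:
  assumes "finite F" "card F \<le> k"
  obtains q where "q \<le> k" "q \<notin> \<pi> ` F"
proof -
  have "card (\<pi> ` F) < card {0..k}"
    using card_image_le[OF assms(1), of \<pi>] assms(2) by simp
  then have "\<not> {0..k} \<subseteq> \<pi> ` F"
    using card_mono[OF finite_imageI[OF assms(1)]] by fastforce
  then obtain q where "q \<in> {0..k}" "q \<notin> \<pi> ` F"
    by blast
  then show ?thesis
    using that by simp
qed

text \<open>A summation has at most \<open>k\<close> free variables, so one of the \<open>k + 1\<close> positions is unused
  by it, and its value is read off the \<open>k\<close>-tuple in which the unused position is overwritten by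
  the new point (the tuple itself if the unused position is the new one, the update then being out
  of range).\<close>
lemma sem_eq_on_extensions:
  assumes IH: "wl_determines_TL n l \<Omega> k t X Y"
    and graphs: "X \<in> graphs n l" "Y \<in> graphs n l"
    and tuples: "a \<in> tuples n k" "b \<in> tuples n k" "u \<in> {1..n}" "u' \<in> {1..n}"
    and atp: "atp l X (a @ [u]) = atp l Y (b @ [u'])"
    and wl: "wl n l X t a = wl n l Y t b"
    and wl_upd: "\<forall>i<k. wl n l X t (a[i := u]) = wl n l Y t (b[i := u'])"
    and \<phi>: "\<phi> \<in> TL l \<Omega> (k + 1) t" "reads_tuples \<pi> (a @ [u]) (b @ [u']) \<nu>X \<nu>Y \<phi>"
  shows "sem n X \<nu>X \<phi> = sem n Y \<nu>Y \<phi>"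
  using graphs _ atp _ \<phi>
proof (rule sem_eq_if_Sum_subterms_eq)
  have len: "length a = k" "length b = k"
    using tuples unfolding tuples_def by auto
  then show "length (a @ [u]) = length (b @ [u'])"
    by simp
  fix y \<chi> \<pi>' \<nu>X' \<nu>Y'
  assume Sum: "Sum y \<chi> \<in> TL l \<Omega> (k + 1) t"
    and reads: "reads_tuples \<pi>' (a @ [u]) (b @ [u']) \<nu>X' \<nu>Y' (Sum y \<chi>)"
  obtain q where q: "q \<le> k" "q \<notin> \<pi>' ` free_vars (Sum y \<chi>)"
    using exists_position_not_in_image[OF finite_free_vars card_free_vars_Sum_le] Sum
    unfolding TL_def by blast
  define \<pi>q where "\<pi>q x = (if \<pi>' x = k then q else \<pi>' x)" for x
  have tuples_q: "a[q := u] \<in> tuples n k" "b[q := u'] \<in> tuples n k"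
    using tuples unfolding tuples_def by (auto dest: subsetD[OF set_update_subset_insert])
  have wl_q: "wl n l X t (a[q := u]) = wl n l Y t (b[q := u'])"
    using wl wl_upd q(1) len by (cases "q = k") (auto simp: list_update_beyond)
  have "reads_tuples \<pi>q (a[q := u]) (b[q := u']) \<nu>X' \<nu>Y' (Sum y \<chi>)"
    unfolding reads_tuples_def
  proof
    fix x assume "x \<in> free_vars (Sum y \<chi>)"
    then have "\<pi>' x \<le> k" "\<pi>' x \<noteq> q" "\<nu>X' x = (a @ [u]) ! \<pi>' x" "\<nu>Y' x = (b @ [u']) ! \<pi>' x"
      using reads q(2) len unfolding reads_tuples_def by force+
    then show "\<pi>q x < length (a[q := u]) \<and> \<nu>X' x = a[q := u] ! \<pi>q x \<and> \<nu>Y' x = b[q := u'] ! \<pi>q x"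
      using q(1) len by (cases "\<pi>' x = k") (auto simp: \<pi>q_def nth_append nth_list_update)
  qed
  then show "sem n X \<nu>X' (Sum y \<chi>) = sem n Y \<nu>Y' (Sum y \<chi>)"
    by (rule wl_determines_TLD[OF IH tuples_q wl_q Sum])
qed

lemma wl_determines_TL_0:
  assumes "X \<in> graphs n l" "Y \<in> graphs n l"
  shows "wl_determines_TL n l \<Omega> k 0 X Y"
  unfolding wl_determines_TL_def
proof (intro allI impI)
  fix a b \<phi> \<pi> \<nu>X \<nu>Y
  assume tuples: "a \<in> tuples n k" "b \<in> tuples n k" and wl: "wl n l X 0 a = wl n l Y 0 b"
    and \<phi>: "\<phi> \<in> TL l \<Omega> (k + 1) 0" "reads_tuples \<pi> a b \<nu>X \<nu>Y \<phi>"
  show "sem n X \<nu>X \<phi> = sem n Y \<nu>Y \<phi>"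
    by (rule sem_eq_if_Sum_subterms_eq[OF assms _ _ _ \<phi>]) (use tuples wl in \<open>auto simp: tuples_def\<close>)
qed

lemma wl_determines_TL_Suc:
  assumes IH: "wl_determines_TL n l \<Omega> k t X Y" and graphs: "X \<in> graphs n l" "Y \<in> graphs n l"
  shows "wl_determines_TL n l \<Omega> k (Suc t) X Y"
  unfolding wl_determines_TL_def
proof (intro allI impI)
  fix a b \<phi> \<pi> \<nu>X \<nu>Y
  assume tuples: "a \<in> tuples n k" "b \<in> tuples n k" and wl: "wl n l X (Suc t) a = wl n l Y (Suc t) b"
    and \<phi>: "\<phi> \<in> TL l \<Omega> (k + 1) (Suc t)" "reads_tuples \<pi> a b \<nu>X \<nu>Y \<phi>"
  have len: "length a = k" "length b = k"
    using tuples unfolding tuples_def by auto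
  have wl_t: "wl n l X t a = wl n l Y t b" and neighbours: "neighbours n l X t a = neighbours n l Y t b"
    using wl unfolding wl_Suc_neighbours by simp_all
  show "sem n X \<nu>X \<phi> = sem n Y \<nu>Y \<phi>"
    using graphs _ atp_eq_if_wl_eq[OF wl] _ \<phi>
  proof (rule sem_eq_if_Sum_subterms_eq)
    show "length a = length b"
      using len by simp
    fix y \<chi> \<pi>' \<nu>X' \<nu>Y'
    assume Sum: "Sum y \<chi> \<in> TL l \<Omega> (k + 1) (Suc t)"
      and reads: "reads_tuples \<pi>' a b \<nu>X' \<nu>Y' (Sum y \<chi>)"
    have "(\<Sum>u\<in>{1..n}. sem n X (\<nu>X'(y := u)) \<chi>) = (\<Sum>u\<in>{1..n}. sem n Y (\<nu>Y'(y := u)) \<chi>)"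
    proof (rule sum_eq_if_image_mset_eq[OF _ _ neighbours[unfolded neighbours_def]])
      fix u u' assume u: "u \<in> {1..n}" "u' \<in> {1..n}"
        and same: "neighbour_label n l X t a u = neighbour_label n l Y t b u'"
      have atp: "atp l X (a @ [u]) = atp l Y (b @ [u'])"
        and wl_upd: "\<forall>i<k. wl n l X t (a[i := u]) = wl n l Y t (b[i := u'])"
        using same len by (auto simp: neighbour_label_def map_eq_conv)
      have "reads_tuples (\<pi>'(y := k)) (a @ [u]) (b @ [u']) (\<nu>X'(y := u)) (\<nu>Y'(y := u')) \<chi>"
        using reads len unfolding reads_tuples_def by (force simp: nth_append)
      then show "sem n X (\<nu>X'(y := u)) \<chi> = sem n Y (\<nu>Y'(y := u')) \<chi>"
        using Sum by (intro sem_eq_on_extensions[OF IH graphs tuples u atp wl_t wl_upd]) auto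
    qed auto
    then show "sem n X \<nu>X' (Sum y \<chi>) = sem n Y \<nu>Y' (Sum y \<chi>)"
      by simp
  qed
qed

lemma wl_determines_TL:
  "X \<in> graphs n l \<Longrightarrow> Y \<in> graphs n l \<Longrightarrow> wl_determines_TL n l \<Omega> k t X Y"
  by (induction t) (simp_all add: wl_determines_TL_0 wl_determines_TL_Suc)

lemma sum_tuples_first:
  "(\<Sum>w\<in>tuples n (Suc m). (f (w ! 0) :: real)) = real n ^ m * (\<Sum>u\<in>{1..n}. f u)"
  by (simp add: sum_tuples_Suc card_tuples sum_distrib_left)

lemma sem_closed_eq_if_gwl_eq:
  assumes graphs: "X \<in> graphs n l" "Y \<in> graphs n l" and "k \<ge> 1" "n \<ge> 1"
    and gwl: "gwl n l k t X = gwl n l k t Y"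
  shows "\<phi> \<in> TL l \<Omega> (k + 1) (Suc t) \<Longrightarrow> free_vars \<phi> = {} \<Longrightarrow> sem n X \<nu>X \<phi> = sem n Y \<nu>Y \<phi>"
proof (induction \<phi>)
  case (App f as)
  then have "map (sem n X \<nu>X) as = map (sem n Y \<nu>Y) as"
    by auto
  then show ?case
    by (simp only: sem.simps)
next
  case (Sum x \<psi>)
  obtain m where m: "k = Suc m"
    using \<open>k \<ge> 1\<close> by (cases k) auto
  have \<psi>: "\<psi> \<in> TL l \<Omega> (k + 1) t" "free_vars \<psi> \<subseteq> {x}"
    using Sum.prems by auto
  define fX where "fX u = sem n X (\<nu>X(x := u)) \<psi>" for u
  define fY where "fY u = sem n Y (\<nu>Y(x := u)) \<psi>" for u
  have "(\<Sum>w\<in>tuples n k. fX (w ! 0)) = (\<Sum>w\<in>tuples n k. fY (w ! 0))"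
  proof (rule sum_eq_if_image_mset_eq[OF finite_tuples finite_tuples])
    show "image_mset (wl n l X t) (mset_set (tuples n k)) = image_mset (wl n l Y t) (mset_set (tuples n k))"
      using gwl unfolding gwl_def .
    fix a b assume ab: "a \<in> tuples n k" "b \<in> tuples n k" "wl n l X t a = wl n l Y t b"
    have "reads_tuples (\<lambda>_. 0) a b (\<nu>X(x := a ! 0)) (\<nu>Y(x := b ! 0)) \<psi>"
      using \<psi>(2) \<open>k \<ge> 1\<close> \<open>a \<in> tuples n k\<close> unfolding reads_tuples_def tuples_def by auto
    then show "fX (a ! 0) = fY (b ! 0)"
      unfolding fX_def fY_def by (rule wl_determines_TLD[OF wl_determines_TL[OF graphs] ab \<psi>(1)])
  qed
  then have "real n ^ m * sum fX {1..n} = real n ^ m * sum fY {1..n}"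
    unfolding m sum_tuples_first .
  then show ?case
    using \<open>n \<ge> 1\<close> by (simp add: fX_def fY_def)
qed auto

section \<open>Expressions detecting colours\<close>

definition indicates :: "nat \<Rightarrow> graph set \<Rightarrow> tlexpr \<Rightarrow> (graph \<Rightarrow> (nat \<Rightarrow> nat) \<Rightarrow> bool) \<Rightarrow> bool" where
  "indicates n Gs \<phi> P \<longleftrightarrow>
     (\<forall>Z\<in>Gs. \<forall>\<nu>. range \<nu> \<subseteq> {1..n} \<longrightarrow> sem n Z \<nu> \<phi> = (if P Z \<nu> then 1 else 0))"

lemma indicatesD:
  "indicates n Gs \<phi> P \<Longrightarrow> Z \<in> Gs \<Longrightarrow> range \<nu> \<subseteq> {1..n} \<Longrightarrow> sem n Z \<nu> \<phi> = (if P Z \<nu> then 1 else 0)"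
  unfolding indicates_def by blast

lemma indicates_cong:
  "indicates n Gs \<phi> P \<Longrightarrow> (\<And>Z \<nu>. Z \<in> Gs \<Longrightarrow> range \<nu> \<subseteq> {1..n} \<Longrightarrow> P Z \<nu> \<longleftrightarrow> Q Z \<nu>)
    \<Longrightarrow> indicates n Gs \<phi> Q"
  unfolding indicates_def by auto

lemma indicates_Zero_expr: "(\<And>Z \<nu>. \<not> P Z \<nu>) \<Longrightarrow> indicates n Gs Zero_expr P"
  unfolding indicates_def by simp

lemma indicates_Scal_of_bool:
  "indicates n Gs \<phi> P \<Longrightarrow> indicates n Gs (Scal (of_bool b) \<phi>) (\<lambda>Z \<nu>. b \<and> P Z \<nu>)"
  unfolding indicates_def by auto

lemma indicates_Mul:
  "indicates n Gs \<phi> P \<Longrightarrow> indicates n Gs \<psi> Q \<Longrightarrow> indicates n Gs (Mul \<phi> \<psi>) (\<lambda>Z \<nu>. P Z \<nu> \<and> Q Z \<nu>)"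
  unfolding indicates_def by auto

lemma prod_indicator:
  "finite A \<Longrightarrow> (\<Prod>a\<in>A. if P a then 1 else 0 :: real) = (if \<forall>a\<in>A. P a then 1 else 0)"
  by (induction A rule: finite_induct) auto

lemma indicates_Prod_over:
  assumes "finite A" "\<And>a. a \<in> A \<Longrightarrow> indicates n Gs (f a) (P a)"
  shows "indicates n Gs (Prod_over f A) (\<lambda>Z \<nu>. \<forall>a\<in>A. P a Z \<nu>)"
  using assms unfolding indicates_def by (simp add: sem_Prod_over prod_indicator cong: prod.cong)

lemma indicates_rename_vars:
  assumes "indicates n Gs \<phi> P" "inj f"
  shows "indicates n Gs (rename_vars f \<phi>) (\<lambda>Z \<nu>. P Z (\<nu> \<circ> f))"
  unfolding indicates_def
proof (intro ballI allI impI)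
  fix Z and \<nu> :: "nat \<Rightarrow> nat" assume "Z \<in> Gs" "range \<nu> \<subseteq> {1..n}"
  moreover have "range (\<nu> \<circ> f) \<subseteq> range \<nu>"
    by auto
  ultimately show "sem n Z \<nu> (rename_vars f \<phi>) = (if P Z (\<nu> \<circ> f) then 1 else 0)"
    using indicatesD[OF assms(1)] sem_rename_vars[OF assms(2)] by (metis order_trans)
qed

definition atoms :: "nat \<Rightarrow> nat \<Rightarrow> tlexpr set" where
  "atoms l m = (\<Union>i\<in>{1..m}. \<Union>j\<in>{1..m}. {EqInd i j, EdgeAt i j}) \<union> (\<Union>i\<in>{1..m}. \<Union>s\<in>{1..l}. {Lab s i})"

lemma atoms_in_TL: "m \<le> K \<Longrightarrow> atoms l m \<subseteq> TL l \<Omega> K 0"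
  and free_vars_atoms: "\<psi> \<in> atoms l m \<Longrightarrow> free_vars \<psi> \<subseteq> {1..m}"
  by (auto simp: atoms_def)

lemma ball_atLeast1_atMost_iff: "(\<forall>i\<in>{1..m}. P i) \<longleftrightarrow> (\<forall>i<m. P (Suc i))"
proof
  assume all: "\<forall>i<m. P (Suc i)"
  show "\<forall>i\<in>{1..m}. P i"
  proof
    fix i assume "i \<in> {1..m}"
    then have "i = Suc (i - 1)" "i - 1 < m"
      by auto
    then show "P i"
      using all by metis
  qed
qed simp

lemma indicator_values_eq_iff: "(if P then 1 else 0 :: real) = (if Q then 1 else 0) \<longleftrightarrow> (P \<longleftrightarrow> Q)"
  by simp

lemma atp_tuple_of_eq_iff:
  assumes "X \<in> graphs n l" "Y \<in> graphs n l"
  shows "atp l X (tuple_of m \<nu>) = atp l Y (tuple_of m \<mu>) \<longleftrightarrow> (\<forall>\<psi>\<in>atoms l m. sem n X \<nu> \<psi> = sem n Y \<mu> \<psi>)"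
proof -
  have "atp l X (tuple_of m \<nu>) = atp l Y (tuple_of m \<mu>) \<longleftrightarrow>
      (\<forall>i\<in>{1..m}. \<forall>j\<in>{1..m}. (\<nu> i = \<nu> j \<longleftrightarrow> \<mu> i = \<mu> j) \<and> (edge X (\<nu> i) (\<nu> j) \<longleftrightarrow> edge Y (\<mu> i) (\<mu> j)))
      \<and> (\<forall>i\<in>{1..m}. \<forall>s\<in>{1..l}. col X (\<nu> i) s = col Y (\<mu> i) s)"
    unfolding ball_atLeast1_atMost_iff[of m]
    using atp_eq_iff[OF assms, of "tuple_of m \<nu>" "tuple_of m \<mu>"] by simp
  also have "\<dots> \<longleftrightarrow> (\<forall>\<psi>\<in>atoms l m. sem n X \<nu> \<psi> = sem n Y \<mu> \<psi>)"
    by (simp add: atoms_def ball_Un indicator_values_eq_iff del: atLeastAtMost_iff)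
  finally show ?thesis .
qed

lemma atp_separator:
  assumes graphs: "X \<in> graphs n l" "Y \<in> graphs n l" and "m \<le> K"
    and differ: "atp l X (tuple_of m \<nu>1) \<noteq> atp l Y (tuple_of m \<nu>2)"
  obtains e where "e \<in> TL l \<Omega> K 0" "free_vars e \<subseteq> {1..m}"
    "\<And>Z \<nu>. Z \<in> graphs n l \<Longrightarrow> atp l Z (tuple_of m \<nu>) = atp l X (tuple_of m \<nu>1) \<Longrightarrow> sem n Z \<nu> e = 1"
    "\<And>Z \<nu>. Z \<in> graphs n l \<Longrightarrow> atp l Z (tuple_of m \<nu>) = atp l Y (tuple_of m \<nu>2) \<Longrightarrow> sem n Z \<nu> e = 0"
proof -
  obtain \<psi> where \<psi>: "\<psi> \<in> atoms l m" "sem n X \<nu>1 \<psi> \<noteq> sem n Y \<nu>2 \<psi>"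
    using differ atp_tuple_of_eq_iff[OF graphs] by blast
  define r1 r2 where "r1 = sem n X \<nu>1 \<psi>" and "r2 = sem n Y \<nu>2 \<psi>"
  define e where "e = Scal (1 / (r1 - r2)) (Plus \<psi> (Scal (- r2) One_expr))"
  have "1 \<le> m"
    using \<psi>(1) by (cases m) (auto simp: atoms_def)
  then have "e \<in> TL l \<Omega> K 0" "free_vars e \<subseteq> {1..m}"
    using \<psi>(1) \<open>m \<le> K\<close> atoms_in_TL[OF \<open>m \<le> K\<close>] free_vars_atoms unfolding e_def by auto
  moreover have "sem n Z \<nu> e = 1"
    if "Z \<in> graphs n l" "atp l Z (tuple_of m \<nu>) = atp l X (tuple_of m \<nu>1)" for Z \<nu>
  proof -
    have "sem n Z \<nu> \<psi> = r1"
      using that(2) atp_tuple_of_eq_iff[OF that(1) graphs(1)] \<psi>(1) unfolding r1_def by blast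
    then show ?thesis
      using \<psi>(2) unfolding e_def r1_def r2_def by simp
  qed
  moreover have "sem n Z \<nu> e = 0"
    if "Z \<in> graphs n l" "atp l Z (tuple_of m \<nu>) = atp l Y (tuple_of m \<nu>2)" for Z \<nu>
  proof -
    have "sem n Z \<nu> \<psi> = r2"
      using that(2) atp_tuple_of_eq_iff[OF that(1) graphs(2)] \<psi>(1) unfolding r2_def by blast
    then show ?thesis
      unfolding e_def by simp
  qed
  ultimately show thesis
    using that by blast
qed

lemma indicates_Prod_over_separators:
  assumes "finite R"
    and "\<And>Z \<nu>. Z \<in> Gs \<Longrightarrow> range \<nu> \<subseteq> {1..n} \<Longrightarrow> obs Z \<nu> \<in> R"
    and "\<And>a' Z \<nu>. a' \<in> R - {a} \<Longrightarrow> Z \<in> Gs \<Longrightarrow> range \<nu> \<subseteq> {1..n} \<Longrightarrow> obs Z \<nu> = a \<Longrightarrow>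
      sem n Z \<nu> (sep a') = 1"
    and "\<And>a' Z \<nu>. a' \<in> R - {a} \<Longrightarrow> Z \<in> Gs \<Longrightarrow> range \<nu> \<subseteq> {1..n} \<Longrightarrow> obs Z \<nu> = a' \<Longrightarrow>
      sem n Z \<nu> (sep a') = 0"
  shows "indicates n Gs (Prod_over sep (R - {a})) (\<lambda>Z \<nu>. obs Z \<nu> = a)"
  unfolding indicates_def
proof (intro ballI allI impI)
  fix Z and \<nu> :: "nat \<Rightarrow> nat" assume Z: "Z \<in> Gs" "range \<nu> \<subseteq> {1..n}"
  show "sem n Z \<nu> (Prod_over sep (R - {a})) = (if obs Z \<nu> = a then 1 else 0)"
  proof (cases "obs Z \<nu> = a")
    case True
    then show ?thesis
      using assms(1,3) Z by (simp add: sem_Prod_over)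
  next
    case False
    then have "obs Z \<nu> \<in> R - {a}"
      using assms(2) Z by blast
    moreover have "sem n Z \<nu> (sep (obs Z \<nu>)) = 0"
      using assms(4) Z calculation by blast
    ultimately show ?thesis
      using False assms(1) by (auto simp: sem_Prod_over)
  qed
qed

lemma atp_separator_on:
  assumes "Gs \<subseteq> graphs n l" "1 \<le> m" "m \<le> K"
    and "Y \<in> Gs" "a' = atp l Y (tuple_of m \<nu>2)" "a' \<noteq> a"
  shows "\<exists>e. e \<in> TL l \<Omega> K 0 \<and> free_vars e \<subseteq> {1..m} \<and> (\<forall>Z\<in>Gs. \<forall>\<nu>. range \<nu> \<subseteq> {1..n} \<longrightarrow>
      (atp l Z (tuple_of m \<nu>) = a \<longrightarrow> sem n Z \<nu> e = 1) \<and> (atp l Z (tuple_of m \<nu>) = a' \<longrightarrow> sem n Z \<nu> e = 0))"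
proof (cases "\<exists>X\<in>Gs. \<exists>\<nu>1. a = atp l X (tuple_of m \<nu>1)")
  case True
  then obtain X \<nu>1 where X: "X \<in> Gs" "a = atp l X (tuple_of m \<nu>1)"
    by blast
  have graphs: "X \<in> graphs n l" "Y \<in> graphs n l"
    using X(1) assms(1,4) by auto
  have "atp l X (tuple_of m \<nu>1) \<noteq> atp l Y (tuple_of m \<nu>2)"
    using assms(5,6) X(2) by auto
  then obtain e where e: "e \<in> TL l \<Omega> K 0" "free_vars e \<subseteq> {1..m}"
    "\<And>Z \<nu>. Z \<in> graphs n l \<Longrightarrow> atp l Z (tuple_of m \<nu>) = atp l X (tuple_of m \<nu>1) \<Longrightarrow> sem n Z \<nu> e = 1"
    "\<And>Z \<nu>. Z \<in> graphs n l \<Longrightarrow> atp l Z (tuple_of m \<nu>) = atp l Y (tuple_of m \<nu>2) \<Longrightarrow> sem n Z \<nu> e = 0"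
    using atp_separator[OF graphs \<open>m \<le> K\<close>, where \<Omega> = \<Omega>] by blast
  then show ?thesis
    unfolding X(2) assms(5) using subsetD[OF assms(1)] by blast
next
  case False
  then show ?thesis
    using assms(2,3) by (intro exI[of _ Zero_expr]) auto
qed

text \<open>A product, over the other atomic types realised in \<open>Gs\<close>, of expressions separating them
  from \<open>a\<close>.\<close>
lemma atp_indicator_exists:
  assumes "finite Gs" "Gs \<subseteq> graphs n l" "1 \<le> m" "m \<le> K"
  obtains \<phi> where "\<phi> \<in> TL l \<Omega> K 0" "free_vars \<phi> \<subseteq> {1..m}"
    "indicates n Gs \<phi> (\<lambda>Z \<nu>. atp l Z (tuple_of m \<nu>) = a)"
proof -
  define R where "R = {atp l Z (tuple_of m \<nu>) |Z \<nu>. Z \<in> Gs \<and> range \<nu> \<subseteq> {1..n}}"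
  have "R \<subseteq> (\<lambda>(Z, w). atp l Z w) ` (Gs \<times> tuples n m)"
    unfolding R_def using tuple_of_in_tuples by fastforce
  then have "finite R"
    using assms(1) finite_tuples by (meson finite_SigmaI finite_imageI finite_subset)
  have "\<forall>a'\<in>R - {a}. \<exists>e. e \<in> TL l \<Omega> K 0 \<and> free_vars e \<subseteq> {1..m} \<and> (\<forall>Z\<in>Gs. \<forall>\<nu>. range \<nu> \<subseteq> {1..n} \<longrightarrow>
      (atp l Z (tuple_of m \<nu>) = a \<longrightarrow> sem n Z \<nu> e = 1) \<and> (atp l Z (tuple_of m \<nu>) = a' \<longrightarrow> sem n Z \<nu> e = 0))"
  proof
    fix a' assume "a' \<in> R - {a}"
    then obtain Y \<nu>2 where "Y \<in> Gs" "a' = atp l Y (tuple_of m \<nu>2)" "a' \<noteq> a"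
      unfolding R_def by blast
    then show "\<exists>e. e \<in> TL l \<Omega> K 0 \<and> free_vars e \<subseteq> {1..m} \<and> (\<forall>Z\<in>Gs. \<forall>\<nu>. range \<nu> \<subseteq> {1..n} \<longrightarrow>
      (atp l Z (tuple_of m \<nu>) = a \<longrightarrow> sem n Z \<nu> e = 1) \<and> (atp l Z (tuple_of m \<nu>) = a' \<longrightarrow> sem n Z \<nu> e = 0))"
      by (rule atp_separator_on[OF assms(2-4)])
  qed
  then obtain sep where sep: "\<forall>a'\<in>R - {a}. sep a' \<in> TL l \<Omega> K 0 \<and> free_vars (sep a') \<subseteq> {1..m} \<and>
      (\<forall>Z\<in>Gs. \<forall>\<nu>. range \<nu> \<subseteq> {1..n} \<longrightarrow>
        (atp l Z (tuple_of m \<nu>) = a \<longrightarrow> sem n Z \<nu> (sep a') = 1) \<and>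
        (atp l Z (tuple_of m \<nu>) = a' \<longrightarrow> sem n Z \<nu> (sep a') = 0))"
    by (rule bchoice[THEN exE])
  have "Prod_over sep (R - {a}) \<in> TL l \<Omega> K 0"
    using sep \<open>finite R\<close> assms(3,4) by (intro Prod_over_in_TL) auto
  moreover have "free_vars (Prod_over sep (R - {a})) \<subseteq> {1..m}"
    using sep \<open>finite R\<close> assms(3) by (auto simp: free_vars_Prod_over)
  moreover have "indicates n Gs (Prod_over sep (R - {a})) (\<lambda>Z \<nu>. atp l Z (tuple_of m \<nu>) = a)"
  proof (rule indicates_Prod_over_separators[OF \<open>finite R\<close>])
    show "atp l Z (tuple_of m \<nu>) \<in> R" if "Z \<in> Gs" "range \<nu> \<subseteq> {1..n}" for Z \<nu>
      using that unfolding R_def by blast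
  qed (use sep in blast)+
  ultimately show thesis
    using that by blast
qed

definition Lagrange_test :: "tlexpr \<Rightarrow> nat \<Rightarrow> nat \<Rightarrow> tlexpr" where
  "Lagrange_test \<psi> r N =
     Prod_over (\<lambda>j. Scal (1 / (real r - real j)) (Plus \<psi> (Scal (- real j) One_expr))) ({0..N} - {r})"

lemma sem_Lagrange_test:
  assumes "sem n Z \<nu> \<psi> = real c" "c \<le> N"
  shows "sem n Z \<nu> (Lagrange_test \<psi> r N) = (if c = r then 1 else 0)"
proof -
  have "sem n Z \<nu> (Lagrange_test \<psi> r N) = (\<Prod>j\<in>{0..N} - {r}. (real c - real j) / (real r - real j))"
    using assms(1) by (simp add: Lagrange_test_def sem_Prod_over)
  also have "\<dots> = (if c = r then 1 else 0)"
    using assms(2) by (auto intro: prod.neutral)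
  finally show ?thesis .
qed

lemma Lagrange_test_in_TL: "1 \<le> K \<Longrightarrow> \<psi> \<in> TL l \<Omega> K t \<Longrightarrow> Lagrange_test \<psi> r N \<in> TL l \<Omega> K t"
  and free_vars_Lagrange_test: "free_vars (Lagrange_test \<psi> r N) \<subseteq> insert 1 (free_vars \<psi>)"
  by (auto simp: Lagrange_test_def intro!: Prod_over_in_TL simp: free_vars_Prod_over)

lemma tuple_of_transpose:
  "i < k \<Longrightarrow> tuple_of k (\<nu> \<circ> transpose (Suc i) (Suc k)) = (tuple_of k \<nu>)[i := \<nu> (Suc k)]"
  by (rule nth_equalityI) (auto simp: nth_list_update transpose_def)

lemma neighbour_label_tuple_of:
  "neighbour_label n l Z t (tuple_of k \<nu>) (\<nu> (Suc k)) = (atp l Z (tuple_of (Suc k) \<nu>),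
     map (\<lambda>i. wl n l Z t (tuple_of k (\<nu> \<circ> transpose (Suc i) (Suc k)))) [0..<k])"
  by (simp add: neighbour_label_def tuple_of_Suc tuple_of_transpose cong: map_cong)

lemma Pair_map_upt_eq_iff:
  "(x, map f [0..<k]) = e \<longleftrightarrow> length (snd e) = k \<and> x = fst e \<and> (\<forall>i<k. f i = snd e ! i)"
  by (cases e) (auto simp: list_eq_iff_nth_eq)

text \<open>The \<open>i\<close>-th component of a neighbour label is the colour of the tuple in which the neighbour
  replaces entry \<open>i\<close>; it is tested by the colour indicator with variables \<open>x\<^sub>i\<close> and \<open>x\<^sub>k\<^sub>+\<^sub>1\<close> swapped.\<close>
lemma neighbour_indicator_exists:
  assumes "finite Gs" "Gs \<subseteq> graphs n l"
    and colours: "\<And>c. \<exists>\<phi>. \<phi> \<in> TL l \<Omega> (k + 1) t \<and> free_vars \<phi> \<subseteq> {1..k} \<and>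
      indicates n Gs \<phi> (\<lambda>Z \<nu>. wl n l Z t (tuple_of k \<nu>) = c)"
  obtains T where "T \<in> TL l \<Omega> (k + 1) t" "free_vars T \<subseteq> {1..k + 1}"
    "indicates n Gs T (\<lambda>Z \<nu>. neighbour_label n l Z t (tuple_of k \<nu>) (\<nu> (Suc k)) = e)"
proof -
  obtain F where F: "\<And>c. F c \<in> TL l \<Omega> (k + 1) t \<and> free_vars (F c) \<subseteq> {1..k} \<and>
      indicates n Gs (F c) (\<lambda>Z \<nu>. wl n l Z t (tuple_of k \<nu>) = c)"
    using colours by metis
  obtain A where A: "A \<in> TL l \<Omega> (k + 1) 0" "free_vars A \<subseteq> {1..k + 1}"
    "indicates n Gs A (\<lambda>Z \<nu>. atp l Z (tuple_of (Suc k) \<nu>) = fst e)"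
    using atp_indicator_exists[OF assms(1,2), where m = "Suc k" and K = "k + 1" and \<Omega> = \<Omega> and a = "fst e"]
    by auto
  define sw where "sw i = transpose (Suc i) (Suc k)" for i
  define T where "T = Scal (of_bool (length (snd e) = k))
    (Mul A (Prod_over (\<lambda>i. rename_vars (sw i) (F (snd e ! i))) {0..<k}))"
  have sw_range: "sw i ` {1..k + 1} \<subseteq> {1..k + 1}" if "i < k" for i
    using that unfolding sw_def by auto
  have "rename_vars (sw i) (F c) \<in> TL l \<Omega> (k + 1) t" if "i < k" for i c
    using rename_vars_in_TL[OF sw_range[OF that]] F by blast
  moreover have "A \<in> TL l \<Omega> (k + 1) t"
    using A(1) TL_mono[of 0 t] by blast
  ultimately have "T \<in> TL l \<Omega> (k + 1) t"
    unfolding T_def by (auto intro!: Prod_over_in_TL)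
  moreover have "free_vars T \<subseteq> {1..k + 1}"
  proof -
    have "free_vars (rename_vars (sw i) (F c)) \<subseteq> {1..k + 1}" if "i < k" for i c
    proof -
      have "free_vars (F c) \<subseteq> {1..k + 1}"
        using F by force
      then show ?thesis
        using sw_range[OF that] unfolding free_vars_rename_vars[OF inj_transpose] sw_def by blast
    qed
    then show ?thesis
      unfolding T_def using A(2) by (simp add: free_vars_Prod_over UN_subset_iff)
  qed
  moreover have "indicates n Gs T (\<lambda>Z \<nu>. neighbour_label n l Z t (tuple_of k \<nu>) (\<nu> (Suc k)) = e)"
  proof -
    have "indicates n Gs T (\<lambda>Z \<nu>. length (snd e) = k \<and> atp l Z (tuple_of (Suc k) \<nu>) = fst e \<and>
        (\<forall>i\<in>{0..<k}. wl n l Z t (tuple_of k (\<nu> \<circ> sw i)) = snd e ! i))"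
      unfolding T_def using A(3) F
      by (intro indicates_Scal_of_bool indicates_Mul indicates_Prod_over indicates_rename_vars)
        (auto simp: sw_def)
    then show ?thesis
      by (rule indicates_cong) (auto simp: neighbour_label_tuple_of sw_def Pair_map_upt_eq_iff)
  qed
  ultimately show thesis
    using that by blast
qed

lemma sem_Sum_neighbour_indicator:
  assumes "indicates n Gs T (\<lambda>Z \<nu>. neighbour_label n l Z t (tuple_of k \<nu>) (\<nu> (Suc k)) = e)"
    and "Z \<in> Gs" "range \<nu> \<subseteq> {1..n}"
  shows "sem n Z \<nu> (Sum (Suc k) T) = real (count (neighbours n l Z t (tuple_of k \<nu>)) e)"
proof -
  have "sem n Z (\<nu>(Suc k := u)) T = (if neighbour_label n l Z t (tuple_of k \<nu>) u = e then 1 else 0)"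
    if "u \<in> {1..n}" for u
  proof -
    have "range (\<nu>(Suc k := u)) \<subseteq> {1..n}"
      using assms(3) that by (auto simp: image_subset_iff)
    then show ?thesis
      using indicatesD[OF assms(1,2)] by simp
  qed
  then have "sem n Z \<nu> (Sum (Suc k) T) =
      (\<Sum>u\<in>{1..n}. if neighbour_label n l Z t (tuple_of k \<nu>) u = e then 1 else 0)"
    by simp
  then show ?thesis
    by (simp add: neighbours_def sum_indicator_eq_count)
qed

lemma neighbour_count_indicator_exists:
  assumes "finite Gs" "Gs \<subseteq> graphs n l" "1 \<le> k"
    and colours: "\<And>c. \<exists>\<phi>. \<phi> \<in> TL l \<Omega> (k + 1) t \<and> free_vars \<phi> \<subseteq> {1..k} \<and>
      indicates n Gs \<phi> (\<lambda>Z \<nu>. wl n l Z t (tuple_of k \<nu>) = c)"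
  shows "\<exists>\<psi>. \<psi> \<in> TL l \<Omega> (k + 1) (Suc t) \<and> free_vars \<psi> \<subseteq> {1..k} \<and>
    indicates n Gs \<psi> (\<lambda>Z \<nu>. count (neighbours n l Z t (tuple_of k \<nu>)) e = r)"
proof -
  obtain T where T: "T \<in> TL l \<Omega> (k + 1) t" "free_vars T \<subseteq> {1..k + 1}"
    "indicates n Gs T (\<lambda>Z \<nu>. neighbour_label n l Z t (tuple_of k \<nu>) (\<nu> (Suc k)) = e)"
    using neighbour_indicator_exists[OF assms(1,2) colours] by blast
  have "Lagrange_test (Sum (Suc k) T) r n \<in> TL l \<Omega> (k + 1) (Suc t)"
    using T(1) by (intro Lagrange_test_in_TL) auto
  moreover have "free_vars (Lagrange_test (Sum (Suc k) T) r n) \<subseteq> {1..k}"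
  proof -
    have "free_vars (Lagrange_test (Sum (Suc k) T) r n) \<subseteq> insert 1 (free_vars T - {Suc k})"
      using free_vars_Lagrange_test[of "Sum (Suc k) T" r n] by simp
    also have "\<dots> \<subseteq> {1..k}"
      using T(2) \<open>1 \<le> k\<close> by (auto simp: subset_iff)
    finally show ?thesis .
  qed
  moreover have "indicates n Gs (Lagrange_test (Sum (Suc k) T) r n)
      (\<lambda>Z \<nu>. count (neighbours n l Z t (tuple_of k \<nu>)) e = r)"
    unfolding indicates_def
  proof (intro ballI allI impI)
    fix Z and \<nu> :: "nat \<Rightarrow> nat" assume Z: "Z \<in> Gs" "range \<nu> \<subseteq> {1..n}"
    have "count (neighbours n l Z t (tuple_of k \<nu>)) e \<le> size (neighbours n l Z t (tuple_of k \<nu>))"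
      by (rule count_le_size)
    then have "count (neighbours n l Z t (tuple_of k \<nu>)) e \<le> n"
      by (simp add: neighbours_def)
    then show "sem n Z \<nu> (Lagrange_test (Sum (Suc k) T) r n) =
        (if count (neighbours n l Z t (tuple_of k \<nu>)) e = r then 1 else 0)"
      by (rule sem_Lagrange_test[OF sem_Sum_neighbour_indicator[OF T(3) Z]])
  qed
  ultimately show ?thesis
    by blast
qed

lemma multiset_eq_iff_on:
  assumes "set_mset A \<subseteq> E" "set_mset B \<subseteq> E"
  shows "A = B \<longleftrightarrow> (\<forall>e\<in>E. count A e = count B e)"
proof
  assume counts: "\<forall>e\<in>E. count A e = count B e"
  show "A = B"
  proof (rule multiset_eqI)
    fix e
    show "count A e = count B e"
    proof (cases "e \<in> E")
      case False
      then have "e \<notin># A" "e \<notin># B"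
        using assms by auto
      then show ?thesis
        by (simp add: not_in_iff)
    qed (use counts in blast)
  qed
qed simp

lemma wl_Suc_eq_Refine_iff:
  assumes "set_mset (neighbours n l Z t v) \<subseteq> E" "set_mset M \<subseteq> E"
  shows "wl n l Z (Suc t) v = Refine c0 M \<longleftrightarrow>
    wl n l Z t v = c0 \<and> (\<forall>e\<in>E. count (neighbours n l Z t v) e = count M e)"
  using multiset_eq_iff_on[OF assms] by (simp only: wl_Suc_neighbours wlcol.inject)

text \<open>The refined colour is tested by the old colour together with one count test for every
  neighbour label that occurs in \<open>M\<close> or is realised in \<open>Gs\<close>.\<close>
lemma colour_indicator_Refine:
  assumes "finite Gs" "Gs \<subseteq> graphs n l" "1 \<le> k"
    and colours: "\<And>c. \<exists>\<phi>. \<phi> \<in> TL l \<Omega> (k + 1) t \<and> free_vars \<phi> \<subseteq> {1..k} \<and>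
      indicates n Gs \<phi> (\<lambda>Z \<nu>. wl n l Z t (tuple_of k \<nu>) = c)"
  shows "\<exists>\<phi>. \<phi> \<in> TL l \<Omega> (k + 1) (Suc t) \<and> free_vars \<phi> \<subseteq> {1..k} \<and>
      indicates n Gs \<phi> (\<lambda>Z \<nu>. wl n l Z (Suc t) (tuple_of k \<nu>) = Refine c0 M)"
proof -
  obtain \<phi>0 where \<phi>0: "\<phi>0 \<in> TL l \<Omega> (k + 1) t" "free_vars \<phi>0 \<subseteq> {1..k}"
    "indicates n Gs \<phi>0 (\<lambda>Z \<nu>. wl n l Z t (tuple_of k \<nu>) = c0)"
    using colours by blast
  have "\<forall>e. \<exists>\<psi>. \<psi> \<in> TL l \<Omega> (k + 1) (Suc t) \<and> free_vars \<psi> \<subseteq> {1..k} \<and>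
      indicates n Gs \<psi> (\<lambda>Z \<nu>. count (neighbours n l Z t (tuple_of k \<nu>)) e = count M e)"
    by (intro allI neighbour_count_indicator_exists[OF assms])
  then obtain N where "\<forall>e. N e \<in> TL l \<Omega> (k + 1) (Suc t) \<and> free_vars (N e) \<subseteq> {1..k} \<and>
      indicates n Gs (N e) (\<lambda>Z \<nu>. count (neighbours n l Z t (tuple_of k \<nu>)) e = count M e)"
    by (rule choice[THEN exE])
  then have N_TL: "\<And>e. N e \<in> TL l \<Omega> (k + 1) (Suc t)" and N_free: "\<And>e. free_vars (N e) \<subseteq> {1..k}"
    and N_ind: "\<And>e. indicates n Gs (N e) (\<lambda>Z \<nu>. count (neighbours n l Z t (tuple_of k \<nu>)) e = count M e)"
    by blast+
  define labels where
    "labels = (\<Union>Z\<in>Gs. \<Union>v\<in>tuples n k. set_mset (neighbours n l Z t v)) \<union> set_mset M"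
  have "finite labels"
    unfolding labels_def using assms(1) finite_tuples by auto
  define \<phi> where "\<phi> = Mul \<phi>0 (Prod_over N labels)"
  have "\<phi> \<in> TL l \<Omega> (k + 1) (Suc t)"
    unfolding \<phi>_def using \<phi>0(1) TL_mono[of t "Suc t"] N_TL \<open>finite labels\<close>
    by (auto intro!: Prod_over_in_TL)
  moreover have "free_vars \<phi> \<subseteq> {1..k}"
    unfolding \<phi>_def using \<phi>0(2) N_free \<open>finite labels\<close> \<open>1 \<le> k\<close>
    by (simp add: free_vars_Prod_over UN_subset_iff)
  moreover have "indicates n Gs \<phi> (\<lambda>Z \<nu>. wl n l Z t (tuple_of k \<nu>) = c0 \<and>
      (\<forall>e\<in>labels. count (neighbours n l Z t (tuple_of k \<nu>)) e = count M e))"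
    unfolding \<phi>_def using \<phi>0(3) N_ind \<open>finite labels\<close> by (intro indicates_Mul indicates_Prod_over)
  then have "indicates n Gs \<phi> (\<lambda>Z \<nu>. wl n l Z (Suc t) (tuple_of k \<nu>) = Refine c0 M)"
  proof (rule indicates_cong)
    fix Z and \<nu> :: "nat \<Rightarrow> nat" assume "Z \<in> Gs" "range \<nu> \<subseteq> {1..n}"
    then have "set_mset (neighbours n l Z t (tuple_of k \<nu>)) \<subseteq> labels"
      unfolding labels_def
      using UN_upper[OF tuple_of_in_tuples, of \<nu> n "\<lambda>v. set_mset (neighbours n l Z t v)" k]
        UN_upper[of Z Gs "\<lambda>Z. \<Union>v\<in>tuples n k. set_mset (neighbours n l Z t v)"] by blast
    moreover have "set_mset M \<subseteq> labels"
      unfolding labels_def by blast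
    ultimately show "(wl n l Z t (tuple_of k \<nu>) = c0 \<and>
        (\<forall>e\<in>labels. count (neighbours n l Z t (tuple_of k \<nu>)) e = count M e))
      \<longleftrightarrow> wl n l Z (Suc t) (tuple_of k \<nu>) = Refine c0 M"
      by (simp only: wl_Suc_eq_Refine_iff)
  qed
  ultimately show ?thesis
    by blast
qed

lemma colour_indicator_exists:
  assumes "finite Gs" "Gs \<subseteq> graphs n l" "1 \<le> k"
  shows "\<exists>\<phi>. \<phi> \<in> TL l \<Omega> (k + 1) t \<and> free_vars \<phi> \<subseteq> {1..k} \<and>
      indicates n Gs \<phi> (\<lambda>Z \<nu>. wl n l Z t (tuple_of k \<nu>) = c)"
proof (induction t arbitrary: c)
  case 0
  show ?case
  proof (cases c)
    case (Base a)
    obtain \<phi> where "\<phi> \<in> TL l \<Omega> (k + 1) 0" "free_vars \<phi> \<subseteq> {1..k}"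
      "indicates n Gs \<phi> (\<lambda>Z \<nu>. atp l Z (tuple_of k \<nu>) = a)"
      using atp_indicator_exists[OF assms, where K = "k + 1" and \<Omega> = \<Omega> and a = a] by auto
    then show ?thesis
      unfolding Base by (auto elim!: indicates_cong)
  next
    case (Refine c0 M)
    then show ?thesis
      using \<open>1 \<le> k\<close> by (intro exI[of _ Zero_expr]) (simp add: indicates_Zero_expr)
  qed
next
  case (Suc t)
  show ?case
  proof (cases c)
    case (Base a)
    then show ?thesis
      using \<open>1 \<le> k\<close> by (intro exI[of _ Zero_expr]) (simp add: indicates_Zero_expr)
  next
    case (Refine c0 M)
    then show ?thesis
      using colour_indicator_Refine[OF assms Suc.IH] by blast
  qed
qed

lemma sem_Sums_colour_indicator:
  assumes "indicates n Gs \<phi> (\<lambda>Z \<nu>. wl n l Z t (tuple_of k \<nu>) = c)" "Z \<in> Gs" "range \<nu> \<subseteq> {1..n}"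
  shows "sem n Z \<nu> (Sums [1..<Suc k] \<phi>) = real (count (gwl n l k t Z) c)"
proof -
  have "sem n Z (fun_upds \<nu> [1..<Suc k] w) \<phi> = (if wl n l Z t w = c then 1 else 0)"
    if "w \<in> tuples n k" for w
  proof -
    have "length w = length [1..<Suc k]" "set w \<subseteq> {1..n}"
      using that unfolding tuples_def by auto
    then have "range (fun_upds \<nu> [1..<Suc k] w) \<subseteq> {1..n}"
      "tuple_of k (fun_upds \<nu> [1..<Suc k] w) = w"
      using range_fun_upds[OF assms(3)] map_fun_upds[of "[1..<Suc k]" w \<nu>] unfolding tuple_of_def by auto
    then show ?thesis
      using indicatesD[OF assms(1,2)] by metis
  qed
  then have "sem n Z \<nu> (Sums [1..<Suc k] \<phi>) = (\<Sum>w\<in>tuples n k. if wl n l Z t w = c then 1 else 0)"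
    by (simp add: sem_Sums del: upt_Suc)
  also have "\<dots> = real (count (gwl n l k t Z) c)"
    unfolding gwl_def by (rule sum_indicator_eq_count[OF finite_tuples])
  finally show ?thesis .
qed

lemma gwl_eq_if_TL_eq:
  assumes "(G, H) \<in> rho0_TL n l (TL l \<Omega> (k + 1) (t + k))" "1 \<le> k" "1 \<le> n"
  shows "gwl n l k t G = gwl n l k t H"
proof (rule multiset_eqI)
  fix c
  have graphs: "{G, H} \<subseteq> graphs n l"
    using assms(1) unfolding rho0_TL_def by auto
  obtain \<phi> where \<phi>: "\<phi> \<in> TL l \<Omega> (k + 1) t" "free_vars \<phi> \<subseteq> {1..k}"
    "indicates n {G, H} \<phi> (\<lambda>Z \<nu>. wl n l Z t (tuple_of k \<nu>) = c)"
    using colour_indicator_exists[OF _ graphs assms(2)] by blast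
  define \<nu> :: "nat \<Rightarrow> nat" where "\<nu> = (\<lambda>_. 1)"
  have "range \<nu> \<subseteq> {1..n}"
    using assms(3) unfolding \<nu>_def by auto
  moreover have "Sums [1..<Suc k] \<phi> \<in> TL l \<Omega> (k + 1) (t + k)"
    using Sums_in_TL[OF _ \<phi>(1), of "[1..<Suc k]"] by (simp add: subset_iff del: upt_Suc)
  moreover have "free_vars (Sums [1..<Suc k] \<phi>) = {}"
    using \<phi>(2) by (auto simp: free_vars_Sums simp del: upt_Suc)
  ultimately have "sem n G \<nu> (Sums [1..<Suc k] \<phi>) = sem n H \<nu> (Sums [1..<Suc k] \<phi>)"
    using assms(1) unfolding rho0_TL_def by blast
  then show "count (gwl n l k t G) c = count (gwl n l k t H) c"
    using sem_Sums_colour_indicator[OF \<phi>(3)] \<open>range \<nu> \<subseteq> {1..n}\<close> by simp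
qed

theorem mainTheorem6:
  fixes n l k t :: nat and \<Omega> :: "(nat \<times> (real list \<Rightarrow> real)) set"
  assumes "n \<ge> 1" and "l \<ge> 1" and "k \<ge> 1"
    and "\<forall>(p, f) \<in> \<Omega>. p \<ge> 1"
  shows "rho0_TL n l (TL l \<Omega> (k + 1) (t + k)) \<subseteq> rho0_gwl n l k t
       \<and> rho0_gwl n l k t \<subseteq> rho0_TL n l (TL l \<Omega> (k + 1) (t + 1))"
proof (intro conjI subsetI; clarify)
  fix G H
  assume "(G, H) \<in> rho0_TL n l (TL l \<Omega> (k + 1) (t + k))"
  then show "(G, H) \<in> rho0_gwl n l k t"
    using gwl_eq_if_TL_eq[OF _ assms(3,1)] unfolding rho0_TL_def rho0_gwl_def by blast
next
  fix G H
  assume "(G, H) \<in> rho0_gwl n l k t"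
  then have graphs: "G \<in> graphs n l" "H \<in> graphs n l" and "gwl n l k t G = gwl n l k t H"
    unfolding rho0_gwl_def by auto
  then show "(G, H) \<in> rho0_TL n l (TL l \<Omega> (k + 1) (t + 1))"
    using sem_closed_eq_if_gwl_eq[OF graphs assms(3,1)] unfolding rho0_TL_def by auto
qed

end
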